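(* Fix unit vectors $A,B,C\in\mathbb S^2\subset\operatorname{Im}\mathbb H$. Let $\bar\nu:\mathbb S^2\times\mathbb S^2\to\mathbb R^3$, $\bar\nu(x,y)=(x\cdot y,x\cdot C,y\cdot C)$, let $\pi_X:\mathbb S^3\to\mathbb S^2$, $\pi_X(p)=\bar pXp$, let $\nu=\bar\nu\circ(\pi_A\times\pi_B):\mathbb S^3\times\mathbb S^3\to\mathbb R^3$, and let $\Delta=\bar\nu(\mathbb S^2\times\mathbb S^2)$, with interior $\mathring\Delta$, boundary $\partial\Delta$, and $V=\{(1,1,1),(1,-1,-1),(-1,1,-1),(-1,-1,1)\}$. For $(x,y)\in\mathbb S^2\times\mathbb S^2$: (1) if $\dim\operatorname{Span}\{x,y,C\}=1$, then $\bar\nu(x,y)\in V$, $\bar\nu^{-1}(\bar\nu(x,y))=\{(x,y)\}$, and $\nu^{-1}(\bar\nu(x,y))$ is a $2$-torus; (2) if $\dim\operatorname{Span}\{x,y,C\}=2$, then $\bar\nu(x,y)\in\partial\Delta\setminus V$, $\bar\nu^{-1}(\bar\nu(x,y))$ is a circle, and $\nu^{-1}(\bar\nu(x,y))$ is a $3$-torus; (3) if $\dim\operatorname{Span}\{x,y,C\}=3$, then $\bar\nu(x,y)\in\mathring\Delta$, $\bar\nu^{-1}(\bar\nu(x,y))$ is a disjoint union of two circles, and $\nu^{-1}(\bar\nu(x,y))$ is a disjoint union of two $3$-tori. Moreover the four points with $x,y\in\{\pm C\}$ map bijectively onto $V$: $\bar\nu(C,C)=(1,1,1)$, $\bar\nu(C,-C)=(-1,1,-1)$,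 $\bar\nu(-C,C)=(-1,-1,1)$, $\bar\nu(-C,-C)=(1,-1,-1)$.
   Context: $\mathbb S^3$ is the unit quaternions, $\mathbb S^2$ the unit imaginary quaternions, $\cdot$ the Euclidean inner product on $\operatorname{Im}\mathbb H\cong\mathbb R^3$. The map $\pi_A\times\pi_B$ is a $\mathbb T^2$-bundle (each $\pi_X$ is a circle bundle, a Hopf fibration). $\nu$ is the multi-moment map of the $\mathbb T^3$-action $(p,q)\mapsto(e^{At_1}pe^{-Ct_3},e^{Bt_2}qe^{-Ct_3})$ on the homogeneous nearly Kähler $\mathbb S^3\times\mathbb S^3$, in a suitable basis of $\Lambda^2\mathfrak t^*\cong\mathbb R^3$. *)

theory Defs
  imports "HOL-Analysis.Analysis"
begin

text \<open>Quaternions H = R + Im H, modelled as pairs (real part, imaginary part in real^3).\<close>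
type_synonym quat = "real \<times> (real^3)"

definition qmult :: "quat \<Rightarrow> quat \<Rightarrow> quat" where
  "qmult p q = (fst p * fst q - snd p \<bullet> snd q,
                fst p *\<^sub>R snd q + fst q *\<^sub>R snd p + cross3 (snd p) (snd q))"

definition qconj :: "quat \<Rightarrow> quat" where
  "qconj p = (fst p, - snd p)"

definition S3 :: "quat set" where "S3 = sphere 0 1"
definition S2 :: "(real^3) set" where "S2 = sphere 0 1"

text \<open>Hopf map pi_X(p) = conj(p) X p (imaginary part; the real part vanishes).\<close>
definition hopf :: "real^3 \<Rightarrow> quat \<Rightarrow> real^3" where
  "hopf X p = snd (qmult (qmult (qconj p) (0, X)) p)"

definition nubar :: "real^3 \<Rightarrow> real^3 \<Rightarrow> real^3 \<Rightarrow> real \<times> real \<times> real" where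
  "nubar C x y = (x \<bullet> y, x \<bullet> C, y \<bullet> C)"

definition nu :: "real^3 \<Rightarrow> real^3 \<Rightarrow> real^3 \<Rightarrow> quat \<Rightarrow> quat \<Rightarrow> real \<times> real \<times> real" where
  "nu A B C p q = nubar C (hopf A p) (hopf B q)"

definition Delta :: "real^3 \<Rightarrow> (real \<times> real \<times> real) set" where
  "Delta C = (\<lambda>(x, y). nubar C x y) ` (S2 \<times> S2)"

definition Vset :: "(real \<times> real \<times> real) set" where
  "Vset = {(1, 1, 1), (1, -1, -1), (-1, 1, -1), (-1, -1, 1)}"

definition nubar_fibre :: "real^3 \<Rightarrow> real \<times> real \<times> real \<Rightarrow> ((real^3) \<times> (real^3)) set" where
  "nubar_fibre C z = {(x, y). x \<in> S2 \<and> y \<in> S2 \<and> nubar C x y = z}"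

definition nu_fibre :: "real^3 \<Rightarrow> real^3 \<Rightarrow> real^3 \<Rightarrow> real \<times> real \<times> real \<Rightarrow> (quat \<times> quat) set" where
  "nu_fibre A B C z = {(p, q). p \<in> S3 \<and> q \<in> S3 \<and> nu A B C p q = z}"

definition circle :: "complex set" where "circle = sphere 0 1"

definition is_circle :: "'a::topological_space set \<Rightarrow> bool" where
  "is_circle S \<longleftrightarrow> S homeomorphic circle"

definition is_2torus :: "'a::topological_space set \<Rightarrow> bool" where
  "is_2torus S \<longleftrightarrow> S homeomorphic (circle \<times> circle)"

definition is_3torus :: "'a::topological_space set \<Rightarrow> bool" where
  "is_3torus S \<longleftrightarrow> S homeomorphic (circle \<times> circle \<times> circle)"

definition is_two_circles :: "'a::topological_space set \<Rightarrow> bool" where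
  "is_two_circles S \<longleftrightarrow> S homeomorphic (circle \<times> {0::real, 1})"

definition is_two_3tori :: "'a::topological_space set \<Rightarrow> bool" where
  "is_two_3tori S \<longleftrightarrow> S homeomorphic ((circle \<times> circle \<times> circle) \<times> {0::real, 1})"

end

theory Submission
  imports Defs
begin

text \<open>
  Fix a unit vector D orthogonal to C and write \<open>v = (v\<cdot>C) C + Re \<zeta>(v) D + Im \<zeta>(v) (C \<times> D)\<close>
  with \<open>\<zeta>(v) \<in> \<complex>\<close>. Then \<open>nubar C x y = (x\<cdot>C y\<cdot>C + Re (\<zeta>(x) cnj \<zeta>(y)), x\<cdot>C, y\<cdot>C)\<close>, so the
  pairs with the same image as (x, y) are those with the same heights along C and the same
  \<open>\<zeta>(x) cnj \<zeta>(y)\<close> up to conjugation: the orbit of (x, y) under the rotations about C together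
  with the orbit of its mirror image in the plane of C and D. These two circles collapse to the
  point (x, y) if \<open>\<zeta>(x) = \<zeta>(y) = 0\<close>, coincide if \<open>Im (\<zeta>(x) cnj \<zeta>(y)) = 0\<close> and are disjoint
  otherwise, and these are exactly the cases \<open>dim span {x, y, C} = 1, 2, 3\<close>. The Gram determinant
  of x, y, C, a polynomial in \<open>nubar C x y\<close>, equals \<open>Im (\<zeta>(x) cnj \<zeta>(y))\<^sup>2\<close>. Delta lies where it is
  \<open>\<ge> 0\<close> and contains the open set where it is \<open>> 0\<close> and the second coordinate lies in
  \<open>(-1, 1)\<close>, so \<open>nubar C x y\<close> is on the frontier exactly when this square vanishes.

  A rotation about C through \<open>arg w\<close>, \<open>w = (c + i s)\<^sup>2\<close>, lifts along the Hopf maps to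
  \<open>p \<mapsto> (c + s A) p (c - s C)\<close>. Combined with the circle actions on the Hopf fibres this
  parametrises the preimage of an orbit by a 3-torus, whereas the preimage of a point is a
  product of two Hopf fibres.
\<close>

lemma circle_iff [simp]: "w \<in> circle \<longleftrightarrow> cmod w = 1"
  by (simp add: circle_def)

lemma compact_circle: "compact circle"
  by (simp add: circle_def)

lemma homeomorphic_Times:
  assumes "S homeomorphic T" and "S' homeomorphic T'"
  shows "(S \<times> S') homeomorphic (T \<times> T')"
proof -
  obtain f g where fg: "homeomorphism S T f g"
    using assms(1) by (auto simp: homeomorphic_def)
  obtain f' g' where fg': "homeomorphism S' T' f' g'"
    using assms(2) by (auto simp: homeomorphic_def)
  have "homeomorphism (S \<times> S') (T \<times> T') (\<lambda>z. (f (fst z), f' (snd z))) (\<lambda>z. (g (fst z), g' (snd z)))"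
  proof
    show "continuous_on (S \<times> S') (\<lambda>z. (f (fst z), f' (snd z)))"
      using fg fg' unfolding homeomorphism_def
      by (intro continuous_on_Pair continuous_on_compose2[of S f _ fst] continuous_on_compose2[of S' f' _ snd])
        (auto intro: continuous_intros)
    show "continuous_on (T \<times> T') (\<lambda>z. (g (fst z), g' (snd z)))"
      using fg fg' unfolding homeomorphism_def
      by (intro continuous_on_Pair continuous_on_compose2[of T g _ fst] continuous_on_compose2[of T' g' _ snd])
        (auto intro: continuous_intros)
  qed (use fg fg' in \<open>auto simp: homeomorphism_def\<close>; blast)+
  then show ?thesis by (auto simp: homeomorphic_def)
qed

lemma homeomorphic_disjoint_Un:
  fixes X Y :: "'b::real_normed_vector set" and K :: "'a::metric_space set"
  assumes K: "compact K" and X: "K homeomorphic X" and Y: "K homeomorphic Y" and XY: "X \<inter> Y = {}"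
  shows "(K \<times> {0::real, 1}) homeomorphic (X \<union> Y)"
proof -
  obtain f g where f: "homeomorphism K X f g" using X by (auto simp: homeomorphic_def)
  obtain f' g' where f': "homeomorphism K Y f' g'" using Y by (auto simp: homeomorphic_def)
  text \<open>On \<open>K \<times> {0, 1}\<close> the affine combination is f on one copy and f' on the other.\<close>
  define h where "h z = (1 - snd z) *\<^sub>R f (fst z) + snd z *\<^sub>R f' (fst z)" for z :: "'a \<times> real"
  have h: "h (k, 0) = f k" "h (k, 1) = f' k" for k by (simp_all add: h_def)
  show ?thesis
  proof (rule homeomorphic_compact)
    show "compact (K \<times> {0::real, 1})" using K by (intro compact_Times) auto
    have "continuous_on (K \<times> {0::real, 1}) (\<lambda>z. f (fst z))" "continuous_on (K \<times> {0::real, 1}) (\<lambda>z. f' (fst z))"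
      using f f' unfolding homeomorphism_def
      by (auto intro!: continuous_on_compose2[OF _ continuous_on_fst])
    then show "continuous_on (K \<times> {0::real, 1}) h"
      unfolding h_def by (intro continuous_intros)
    show "h ` (K \<times> {0, 1}) = X \<union> Y"
      using homeomorphism_image1[OF f] homeomorphism_image1[OF f'] by (auto simp: h image_iff)
    show "inj_on h (K \<times> {0, 1})"
      using f f' XY h homeomorphism_apply1[OF f] homeomorphism_apply1[OF f']
      unfolding inj_on_def homeomorphism_def by (auto simp: h) (metis disjoint_iff imageI)+
  qed
qed

lemma mult_cnj_unit:
  fixes w a b :: complex
  assumes "cmod w = 1"
  shows "w * a * cnj (w * b) = a * cnj b"
proof -
  have "w * cnj w = 1" using complex_norm_square[of w] assms by simp
  moreover have "w * a * cnj (w * b) = (w * cnj w) * (a * cnj b)" by (simp add: ac_simps)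
  ultimately show ?thesis by simp
qed

lemma complex_pair_rotation:
  fixes p q p' q' :: complex
  assumes "cmod p' = cmod p" and "cmod q' = cmod q" and "p' * cnj q' = p * cnj q"
  obtains w where "cmod w = 1" and "p' = w * p" and "q' = w * q"
proof (cases "p = 0")
  case False
  define w where "w = p' / p"
  have w: "cmod w = 1" using assms(1) False by (simp add: w_def norm_divide)
  have p': "p' = w * p" using False by (simp add: w_def)
  then have "p * (w * cnj q') = p * cnj q" using assms(3) by (simp add: ac_simps)
  then have "cnj w * q' = q" using False by (metis complex_cnj_cnj complex_cnj_mult mult_left_cancel)
  moreover have "w * cnj w = 1" using w complex_norm_square[of w] by simp
  ultimately have "q' = w * q" by (metis mult.assoc mult_1)
  with w p' that show ?thesis by blast
next
  case True
  then have "p' = 0" using assms(1) by simp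
  show ?thesis
  proof (cases "q = 0")
    case True
    then show ?thesis using assms(2) \<open>p' = 0\<close> \<open>p = 0\<close> that[of 1] by simp
  next
    case False
    have "cmod (q' / q) = 1" using assms(2) False by (simp add: norm_divide)
    then show ?thesis using False \<open>p' = 0\<close> \<open>p = 0\<close> that[of "q' / q"] by simp
  qed
qed

lemma complex_pair_rotation_or_cnj:
  fixes p q p' q' :: complex
  assumes "cmod p' = cmod p" and "cmod q' = cmod q" and "Re (p' * cnj q') = Re (p * cnj q)"
  obtains w where "cmod w = 1"
    and "p' = w * p \<and> q' = w * q \<or> p' = w * cnj p \<and> q' = w * cnj q"
proof -
  have "cmod (p' * cnj q') = cmod (p * cnj q)" using assms by (simp add: norm_mult)
  then have "(Im (p' * cnj q'))\<^sup>2 = (Im (p * cnj q))\<^sup>2"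
    using assms(3) by (simp add: cmod_def)
  then consider "p' * cnj q' = p * cnj q" | "p' * cnj q' = cnj p * cnj (cnj q)"
    using assms(3) by (auto simp: power2_eq_iff complex_eq_iff)
  then show ?thesis
  proof cases
    case 1
    then show ?thesis using complex_pair_rotation[OF assms(1,2)] that by metis
  next
    case 2
    then show ?thesis using complex_pair_rotation[of p' "cnj p" q' "cnj q"] assms that by auto
  qed
qed

lemma real_multiple_if_Im_mult_cnj_eq_0:
  fixes a b :: complex
  assumes "Im (a * cnj b) = 0" and "b \<noteq> 0"
  obtains k :: real where "a = of_real k * b"
  using assms
  by (metis Im_complex_div_eq_0 Im_complex_of_real Re_complex_of_real
      complex.expand mult.commute nonzero_mult_div_cancel_left times_divide_eq_right)

lemma cnj_eq_unit_mult_if_Im_mult_cnj_eq_0: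
  fixes a b :: complex
  assumes "Im (a * cnj b) = 0" and "a \<noteq> 0 \<or> b \<noteq> 0"
  obtains w where "cmod w = 1" and "cnj a = w * a" and "cnj b = w * b"
proof -
  have conj: "cnj a / a * b = cnj b" if "a \<noteq> 0" and "Im (a * cnj b) = 0" for a b :: complex
    using that
    by (smt (verit, ccfv_SIG) cnj.simps(1,2) complex_cnj_cnj complex_cnj_mult
        complex_eq_iff mult.commute nonzero_mult_div_cancel_left times_divide_eq_right)
  show ?thesis
  proof (cases "a = 0")
    case False
    then show ?thesis using conj[OF False assms(1)] that[of "cnj a / a"] by (simp add: norm_divide)
  next
    case True
    then have "b \<noteq> 0" and "Im (b * cnj a) = 0" using assms by simp_all
    then show ?thesis using conj[of b a] True that[of "cnj b / b"] by (simp add: norm_divide)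
  qed
qed


section \<open>Quaternions and the Hopf map\<close>

lemmas coord_simps =
  qmult_def qconj_def prod_eq_iff vec_eq_iff forall_3 cross3_def inner_vec_def sum_3 vector_def

definition qnorm2 :: "quat \<Rightarrow> real" where
  "qnorm2 p = fst p ^ 2 + snd p \<bullet> snd p"

lemma S3_iff: "p \<in> S3 \<longleftrightarrow> qnorm2 p = 1"
proof -
  have "norm p = sqrt (qnorm2 p)"
    by (cases p) (simp add: norm_Pair qnorm2_def power2_norm_eq_inner)
  moreover have "qnorm2 p \<ge> 0" by (simp add: qnorm2_def)
  ultimately show ?thesis by (auto simp: S3_def)
qed

lemma S2_iff: "x \<in> S2 \<longleftrightarrow> x \<bullet> x = 1"
  by (simp add: S2_def norm_eq_1)

lemma qmult_assoc: "qmult (qmult p q) r = qmult p (qmult q r)"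
  by (simp add: coord_simps algebra_simps)

lemma qmult_one_left [simp]: "qmult (1, 0) p = p"
  by (simp add: coord_simps)

lemma qmult_one_right [simp]: "qmult p (1, 0) = p"
  by (simp add: coord_simps)

lemma qnorm2_qmult: "qnorm2 (qmult p q) = qnorm2 p * qnorm2 q"
  by (simp add: qnorm2_def coord_simps algebra_simps power2_eq_square)

lemma qnorm2_qconj [simp]: "qnorm2 (qconj p) = qnorm2 p"
  by (simp add: qnorm2_def qconj_def)

lemma qconj_qmult_self: "qmult (qconj p) p = (qnorm2 p, 0)"
  by (simp add: qnorm2_def coord_simps algebra_simps power2_eq_square)

lemma qmult_qconj_self: "qmult p (qconj p) = (qnorm2 p, 0)"
  by (simp add: qnorm2_def coord_simps algebra_simps power2_eq_square)

lemma qmult_cancel_right: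
  assumes "qnorm2 p = 1" and "qmult a p = qmult b p"
  shows "a = b"
proof -
  have "qmult (qmult a p) (qconj p) = qmult (qmult b p) (qconj p)"
    using assms(2) by simp
  then show ?thesis by (simp add: qmult_assoc qmult_qconj_self assms(1))
qed

lemma continuous_on_qmult [continuous_intros]:
  fixes f g :: "'a::t2_space \<Rightarrow> quat"
  shows "continuous_on S f \<Longrightarrow> continuous_on S g \<Longrightarrow> continuous_on S (\<lambda>x. qmult (f x) (g x))"
  unfolding qmult_def by (intro continuous_intros continuous_on_cross)

lemma hopf_formula:
  "hopf X (a, u) = (a\<^sup>2 - u \<bullet> u) *\<^sub>R X + (2 * (u \<bullet> X)) *\<^sub>R u + (2 * a) *\<^sub>R cross3 X u"
  by (simp add: hopf_def coord_simps algebra_simps power2_eq_square)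

lemma qconj_qmult_hopf: "qmult (qmult (qconj p) (0, X)) p = (0, hopf X p)"
  by (simp add: hopf_def coord_simps algebra_simps)

lemma hopf_qmult: "hopf X (qmult p q) = hopf (hopf X p) q"
  by (simp add: hopf_def coord_simps algebra_simps)

lemma hopf_scaleR: "hopf X (c *\<^sub>R p) = c\<^sup>2 *\<^sub>R hopf X p"
  by (simp add: hopf_def coord_simps algebra_simps power2_eq_square)

lemma hopf_inner: "hopf X p \<bullet> hopf Y p = (qnorm2 p)\<^sup>2 * (X \<bullet> Y)"
  by (simp add: hopf_def qnorm2_def coord_simps algebra_simps power2_eq_square)

lemma hopf_in_S2: "A \<in> S2 \<Longrightarrow> p \<in> S3 \<Longrightarrow> hopf A p \<in> S2"
  by (simp add: S2_iff S3_iff hopf_inner)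

definition qcomplex :: "real^3 \<Rightarrow> complex \<Rightarrow> quat" where
  "qcomplex A w = (Re w, Im w *\<^sub>R A)"

lemma continuous_on_qcomplex [continuous_intros]:
  "continuous_on S f \<Longrightarrow> continuous_on S (\<lambda>x. qcomplex A (f x))"
  unfolding qcomplex_def by (intro continuous_intros)

lemma qnorm2_qcomplex: "A \<bullet> A = 1 \<Longrightarrow> qnorm2 (qcomplex A w) = (cmod w)\<^sup>2"
  unfolding qnorm2_def qcomplex_def cmod_power2 by (simp add: power2_eq_square)

lemma qcomplex_inj: "A \<bullet> A = 1 \<Longrightarrow> qcomplex A w = qcomplex A w' \<Longrightarrow> w = w'"
  by (auto simp: qcomplex_def complex_eq_iff scaleR_cancel_right)

lemma hopf_qcomplex: "A \<bullet> A = 1 \<Longrightarrow> cmod w = 1 \<Longrightarrow> hopf A (qcomplex A w) = A"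
proof -
  assume "A \<bullet> A = 1" and "cmod w = 1"
  moreover have "hopf A (qcomplex A w) = ((Re w)\<^sup>2 + (Im w)\<^sup>2 * (A \<bullet> A)) *\<^sub>R A"
    by (simp add: hopf_def qcomplex_def coord_simps algebra_simps power2_eq_square)
  ultimately show ?thesis by (simp add: cmod_power2[symmetric])
qed

lemma hopf_qcomplex_qmult:
  "A \<bullet> A = 1 \<Longrightarrow> cmod w = 1 \<Longrightarrow> hopf A (qmult (qcomplex A w) p) = hopf A p"
  by (simp add: hopf_qmult hopf_qcomplex)

lemma commute_imag_parallel:
  assumes "qmult r (0, A) = qmult (0, A) r" and "A \<bullet> A = 1"
  shows "snd r = (A \<bullet> snd r) *\<^sub>R A"
proof -
  have "cross3 (snd r) A = cross3 A (snd r)"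
    using assms(1) by (simp add: qmult_def prod_eq_iff)
  then have "cross3 A (cross3 A (snd r)) = 0"
    by (auto simp: coord_simps algebra_simps)
  then show ?thesis
    using Lagrange[of A A "snd r"] assms(2) by simp
qed

text \<open>\<open>r = p p0\<^sup>*\<close> commutes with A, hence lies in the copy of \<open>\<complex>\<close> spanned by 1 and A.\<close>
lemma hopf_eqE:
  assumes A: "A \<bullet> A = 1" and p: "qnorm2 p = 1" and p0: "qnorm2 p0 = 1"
    and h: "hopf A p = hopf A p0"
  obtains w where "cmod w = 1" and "p = qmult (qcomplex A w) p0"
proof -
  define r where "r = qmult p (qconj p0)"
  have "qmult p (qmult (qmult (qmult (qconj p) (0, A)) p) (qconj p0)) = qmult (0, A) r"
    by (simp add: r_def qmult_assoc[symmetric] qmult_qconj_self p)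
  moreover have "qmult p (qmult (qmult (qmult (qconj p0) (0, A)) p0) (qconj p0)) = qmult r (0, A)"
    by (simp add: r_def qmult_assoc qmult_qconj_self p0)
  ultimately have "qmult r (0, A) = qmult (0, A) r"
    using h by (simp add: qconj_qmult_hopf)
  then have par: "snd r = (A \<bullet> snd r) *\<^sub>R A"
    using commute_imag_parallel A by blast
  define w where "w = Complex (fst r) (A \<bullet> snd r)"
  have r: "r = qcomplex A w"
    using par by (simp add: w_def qcomplex_def prod_eq_iff)
  have "qnorm2 r = 1" by (simp add: r_def qnorm2_qmult p p0)
  then have "(cmod w)\<^sup>2 = 1" using qnorm2_qcomplex[OF A, of w] r by simp
  then have "cmod w = 1" using norm_ge_zero[of w] by (auto simp: power2_eq_1_iff)
  moreover have "qmult r p0 = p"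
    by (simp add: r_def qmult_assoc qconj_qmult_self p0)
  ultimately show ?thesis using that r by blast
qed

lemma exists_orthogonal_unit:
  assumes "C \<bullet> C = (1::real)"
  shows "\<exists>D::real^3. D \<bullet> D = 1 \<and> C \<bullet> D = 0"
proof (cases "vector [- (C$2), C$1, 0] = (0::real^3)")
  case True
  then have "C$1 = 0" by (simp add: vec_eq_iff forall_3 vector_def)
  then show ?thesis by (intro exI[of _ "axis 1 1"]) (simp add: inner_axis)
next
  case False
  define d :: "real^3" where "d = vector [- (C$2), C$1, 0]"
  have "C \<bullet> d = 0" by (simp add: d_def inner_vec_def sum_3 vector_def algebra_simps)
  moreover have "d \<noteq> 0" using False d_def by simp
  ultimately show ?thesis
    by (intro exI[of _ "(1 / norm d) *\<^sub>R d"])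
      (simp add: power2_norm_eq_inner[symmetric] power2_eq_square)
qed

text \<open>A preimage of X is \<open>(1 + A\<cdot>X, -A \<times> X)\<close>, normalised; when \<open>X = -A\<close> this vanishes
  and any unit vector orthogonal to A does instead.\<close>
lemma hopf_surj:
  assumes A: "A \<bullet> A = 1" and X: "X \<bullet> X = 1"
  obtains p where "qnorm2 p = 1" and "hopf A p = X"
proof (cases "A \<bullet> X = -1")
  case True
  obtain D where D: "D \<bullet> D = 1" "A \<bullet> D = 0" using exists_orthogonal_unit[OF A] by blast
  have "(X + A) \<bullet> (X + A) = 0"
    using True A X by (simp add: inner_add_left inner_add_right inner_commute)
  then have "X = - A" by (simp add: eq_neg_iff_add_eq_0)
  moreover have "hopf A (0, D) = - A" using D by (simp add: hopf_formula inner_commute)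
  ultimately show ?thesis using D that[of "(0, D)"] by (simp add: qnorm2_def)
next
  case False
  define k where "k = A \<bullet> X"
  have "\<bar>k\<bar> \<le> 1"
    using Cauchy_Schwarz_ineq[of A X] A X by (simp add: k_def abs_square_le_1)
  then have kp: "1 + k > 0" using False k_def by auto
  define u where "u = - cross3 A X"
  have uu: "u \<bullet> u = 1 - k\<^sup>2"
    using dot_cross[of A X A X] A X by (simp add: u_def k_def power2_eq_square inner_commute)
  have uA: "u \<bullet> A = 0" using dot_cross_self(1)[of A X] by (simp add: u_def inner_commute)
  have "hopf A (1 + k, u) = ((1 + k)\<^sup>2 - (1 - k\<^sup>2)) *\<^sub>R A + (2 * (1 + k)) *\<^sub>R (X - k *\<^sub>R A)"
    using uu uA Lagrange[of A A X] A
    by (simp add: hopf_formula u_def k_def inner_commute)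
  also have "\<dots> = (2 * (1 + k)) *\<^sub>R X"
    by (simp add: power2_eq_square algebra_simps)
  finally have h: "hopf A (1 + k, u) = (2 * (1 + k)) *\<^sub>R X" .
  define c where "c = 1 / sqrt (2 * (1 + k))"
  have c2: "c\<^sup>2 * (2 * (1 + k)) = 1" using kp by (simp add: c_def power_divide)
  have "qnorm2 (c *\<^sub>R (1 + k, u)) = c\<^sup>2 * ((1 + k)\<^sup>2 + u \<bullet> u)"
    by (simp add: qnorm2_def power2_eq_square algebra_simps)
  also have "\<dots> = c\<^sup>2 * (2 * (1 + k))"
    by (simp add: uu power2_eq_square algebra_simps)
  finally have "qnorm2 (c *\<^sub>R (1 + k, u)) = c\<^sup>2 * (2 * (1 + k))" .
  moreover have "hopf A (c *\<^sub>R (1 + k, u)) = (c\<^sup>2 * (2 * (1 + k))) *\<^sub>R X"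
    by (simp only: hopf_scaleR h scaleR_scaleR)
  ultimately show ?thesis using that c2 by simp
qed

lemma hopf_fibre_homeomorphic_circle:
  assumes A: "A \<bullet> A = 1" and p0: "qnorm2 p0 = 1"
  shows "circle homeomorphic {p \<in> S3. hopf A p = hopf A p0}"
proof (rule homeomorphic_compact)
  let ?f = "\<lambda>w. qmult (qcomplex A w) p0"
  show "compact circle" by (rule compact_circle)
  show "continuous_on circle ?f" by (intro continuous_intros)
  show "inj_on ?f circle"
  proof (rule inj_onI)
    fix w w' assume "qmult (qcomplex A w) p0 = qmult (qcomplex A w') p0"
    then show "w = w'" using qmult_cancel_right[OF p0] qcomplex_inj[OF A] by blast
  qed
  show "?f ` circle = {p \<in> S3. hopf A p = hopf A p0}"
  proof
    show "?f ` circle \<subseteq> {p \<in> S3. hopf A p = hopf A p0}"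
      using A p0 by (auto simp: circle_def S3_iff qnorm2_qmult qnorm2_qcomplex hopf_qcomplex_qmult)
    show "{p \<in> S3. hopf A p = hopf A p0} \<subseteq> ?f ` circle"
    proof clarify
      fix p assume "p \<in> S3" and h: "hopf A p = hopf A p0"
      then have "qnorm2 p = 1" by (simp add: S3_iff)
      then obtain w where "cmod w = 1" and "p = ?f w"
        using hopf_eqE[OF A _ p0 h] by blast
      then show "p \<in> ?f ` circle" by (simp add: circle_def)
    qed
  qed
qed

section \<open>Coordinates adapted to C\<close>

definition zcoord :: "real^3 \<Rightarrow> real^3 \<Rightarrow> real^3 \<Rightarrow> complex" where
  "zcoord C D v = Complex (v \<bullet> D) (v \<bullet> cross3 C D)"

definition fvec :: "real^3 \<Rightarrow> real^3 \<Rightarrow> real \<Rightarrow> complex \<Rightarrow> real^3" where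
  "fvec C D c z = c *\<^sub>R C + Re z *\<^sub>R D + Im z *\<^sub>R cross3 C D"

text \<open>The rotation about the axis C through the angle \<open>arg w\<close>.\<close>
definition rot :: "real^3 \<Rightarrow> complex \<Rightarrow> real^3 \<Rightarrow> real^3" where
  "rot C w v = Re w *\<^sub>R v + ((1 - Re w) * (v \<bullet> C)) *\<^sub>R C + Im w *\<^sub>R cross3 C v"

definition mirror :: "real^3 \<Rightarrow> real^3 \<Rightarrow> real^3 \<Rightarrow> real^3" where
  "mirror C D v = fvec C D (v \<bullet> C) (cnj (zcoord C D v))"

definition orbit :: "real^3 \<Rightarrow> real^3 \<Rightarrow> real^3 \<Rightarrow> ((real^3) \<times> (real^3)) set" where
  "orbit C x y = (\<lambda>w. (rot C w x, rot C w y)) ` circle"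

lemma continuous_on_rot [continuous_intros]:
  "continuous_on S f \<Longrightarrow> continuous_on S (\<lambda>x. rot C (f x) v)"
  unfolding rot_def by (intro continuous_intros)

lemma inner_cross3_identities:
  "cross3 C v \<bullet> D = - (v \<bullet> cross3 C D)"
  "cross3 C v \<bullet> cross3 C D = (C \<bullet> C) * (v \<bullet> D) - (C \<bullet> D) * (v \<bullet> C)"
  by (simp_all add: coord_simps algebra_simps)

locale frame =
  fixes C D :: "real^3"
  assumes CC: "C \<bullet> C = 1" and DD: "D \<bullet> D = 1" and CD: "C \<bullet> D = 0"
begin

lemma inner_frame [simp]:
  "C \<bullet> C = 1" "D \<bullet> D = 1" "C \<bullet> D = 0" "D \<bullet> C = 0"
  "C \<bullet> cross3 C D = 0" "D \<bullet> cross3 C D = 0" "cross3 C D \<bullet> C = 0" "cross3 C D \<bullet> D = 0"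
  "cross3 C D \<bullet> cross3 C D = 1"
  using CC DD CD dot_cross[of C D C D] dot_cross_self[of C D]
  by (simp_all add: inner_commute power2_eq_square)

lemma inner_fvec:
  "fvec C D c z \<bullet> C = c" "fvec C D c z \<bullet> D = Re z" "fvec C D c z \<bullet> cross3 C D = Im z"
  by (simp_all add: fvec_def inner_add_left)

lemma zcoord_fvec [simp]: "zcoord C D (fvec C D c z) = z"
  by (simp add: zcoord_def inner_fvec complex_eq_iff)

lemma fvec_zcoord: "v = fvec C D (v \<bullet> C) (zcoord C D v)"
proof -
  define w where "w = v - fvec C D (v \<bullet> C) (zcoord C D v)"
  have "w \<bullet> C = 0" and "w \<bullet> D = 0" and wE: "w \<bullet> cross3 C D = 0"
    by (simp_all add: w_def inner_diff_left inner_fvec zcoord_def)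
  then have "cross3 (cross3 C D) w = 0"
    using Lagrange[of "cross3 C D" C D] cross_skew[of w "cross3 C D"] Lagrange[of w C D]
    by (simp add: inner_commute)
  then have "cross3 (cross3 C D) (cross3 (cross3 C D) w) = 0" by simp
  then have "w = 0"
    using Lagrange[of "cross3 C D" "cross3 C D" w] wE inner_frame(4) by (simp add: inner_commute)
  then show ?thesis by (simp add: w_def)
qed

lemma fvec_eq_iff: "fvec C D c z = fvec C D c' z' \<longleftrightarrow> c = c' \<and> z = z'"
  by (metis zcoord_fvec inner_fvec(1))

lemma inner_fvec_fvec: "fvec C D c z \<bullet> fvec C D c' z' = c * c' + Re z * Re z' + Im z * Im z'"
proof -
  have "fvec C D c z \<bullet> fvec C D c' z' =
      c' * (fvec C D c z \<bullet> C) + Re z' * (fvec C D c z \<bullet> D) + Im z' * (fvec C D c z \<bullet> cross3 C D)"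
    by (simp add: fvec_def inner_add_right)
  then show ?thesis by (simp add: inner_fvec algebra_simps)
qed

lemma inner_zcoord: "u \<bullet> v = (u \<bullet> C) * (v \<bullet> C) + Re (zcoord C D u * cnj (zcoord C D v))"
  by (subst fvec_zcoord[of u], subst fvec_zcoord[of v]) (simp add: inner_fvec_fvec inner_fvec)

lemma cmod_zcoord: "u \<bullet> u = 1 \<Longrightarrow> (cmod (zcoord C D u))\<^sup>2 = 1 - (u \<bullet> C)\<^sup>2"
  using inner_zcoord[of u u] by (simp add: cmod_def power2_eq_square)

lemma rot_coords: "rot C w v \<bullet> C = v \<bullet> C" "zcoord C D (rot C w v) = w * zcoord C D v"
  using inner_cross3_identities[of C v D] dot_cross_self(1)[of C v]
  by (simp_all add: rot_def inner_add_left zcoord_def complex_eq_iff algebra_simps inner_commute)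

lemma rot_fvec: "rot C w v = fvec C D (v \<bullet> C) (w * zcoord C D v)"
  by (subst fvec_zcoord[of "rot C w v"]) (simp add: rot_coords)

lemma inner_rot: "cmod w = 1 \<Longrightarrow> rot C w u \<bullet> rot C w v = u \<bullet> v"
  by (simp only: inner_zcoord[of "rot C w u"] inner_zcoord[of u v] rot_coords mult_cnj_unit)

lemma rot_rot: "rot C w (rot C w' v) = rot C (w * w') v"
  by (simp add: rot_fvec[of w "rot C w' v"] rot_fvec[of "w * w'" v] rot_coords mult.assoc)

lemma rot_eq_iff: "rot C w u = rot C w' u \<longleftrightarrow> w * zcoord C D u = w' * zcoord C D u"
  by (simp add: rot_fvec fvec_eq_iff)

lemma mirror_coords: "mirror C D v \<bullet> C = v \<bullet> C" "zcoord C D (mirror C D v) = cnj (zcoord C D v)"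
  by (simp_all add: mirror_def inner_fvec)

lemma inner_mirror: "mirror C D u \<bullet> mirror C D v = u \<bullet> v"
  by (simp add: inner_zcoord[of "mirror C D u"] inner_zcoord[of u v] mirror_coords)

lemma rot_mirror_eq_self_if_zcoord_eq_0:
  assumes "zcoord C D v = 0"
  shows "rot C w v = v" and "mirror C D v = v"
  using fvec_zcoord[of v, symmetric] assms by (simp_all add: rot_fvec mirror_def)

lemma zcoord_linear: "zcoord C D (a *\<^sub>R u - b *\<^sub>R v) = of_real a * zcoord C D u - of_real b * zcoord C D v"
  by (simp add: zcoord_def complex_eq_iff inner_diff_left)

lemma in_span_C_iff: "v \<in> span {C} \<longleftrightarrow> zcoord C D v = 0"
proof
  assume "v \<in> span {C}"
  then obtain k where "v = k *\<^sub>R C" by (auto simp: span_singleton)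
  then show "zcoord C D v = 0" by (simp add: zcoord_def complex_eq_iff)
next
  assume "zcoord C D v = 0"
  then have "v = (v \<bullet> C) *\<^sub>R C" using fvec_zcoord[of v] by (simp add: fvec_def)
  then show "v \<in> span {C}" by (metis span_base span_scale singletonI)
qed

lemma in_span_C_pair_iff:
  assumes "zcoord C D y \<noteq> 0"
  shows "x \<in> span {y, C} \<longleftrightarrow> Im (zcoord C D x * cnj (zcoord C D y)) = 0"
proof
  assume "x \<in> span {y, C}"
  then obtain k where "x - k *\<^sub>R y \<in> span {C}" by (auto simp: span_insert)
  then have "zcoord C D x = of_real k * zcoord C D y"
    using zcoord_linear[of 1 x k y] by (simp add: in_span_C_iff)
  then show "Im (zcoord C D x * cnj (zcoord C D y)) = 0" by simp
next
  assume "Im (zcoord C D x * cnj (zcoord C D y)) = 0"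
  then obtain k where "zcoord C D x = of_real k * zcoord C D y"
    using real_multiple_if_Im_mult_cnj_eq_0 assms by blast
  then have "x - k *\<^sub>R y \<in> span {C}"
    using zcoord_linear[of 1 x k y] by (simp add: in_span_C_iff)
  then show "x \<in> span {y, C}" by (auto simp: span_insert)
qed

lemma dim_span_cases:
  "dim (span {x, y, C}) =
    (if zcoord C D y = 0 then (if zcoord C D x = 0 then 1 else 2)
     else if Im (zcoord C D x * cnj (zcoord C D y)) = 0 then 2 else 3)"
proof -
  have "C \<noteq> 0" using CC by (metis inner_zero_left zero_neq_one)
  then have "dim {C} = 1" using dim_insert[of C "{}"] by (simp add: span_empty)
  then have d2: "dim {y, C} = (if zcoord C D y = 0 then 1 else 2)"
    using dim_insert[of y "{C}"] in_span_C_iff by simp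
  have d3: "dim {x, y, C} = dim {y, C} + (if x \<in> span {y, C} then 0 else 1)"
    using dim_insert[of x "{y, C}"] by simp
  show ?thesis
  proof (cases "zcoord C D y = 0")
    case True
    then have "span {y, C} = span {C}" using in_span_C_iff span_redundant by blast
    then show ?thesis using True d2 d3 in_span_C_iff by (simp add: dim_span)
  next
    case False
    then show ?thesis using d2 d3 in_span_C_pair_iff[OF False] by (simp add: dim_span)
  qed
qed

lemma dim_span_eq_1_iff: "dim (span {x, y, C}) = 1 \<longleftrightarrow> zcoord C D x = 0 \<and> zcoord C D y = 0"
  unfolding dim_span_cases by auto

lemma dim_span_eq_2_iff:
  "dim (span {x, y, C}) = 2 \<longleftrightarrow>
    (zcoord C D x \<noteq> 0 \<or> zcoord C D y \<noteq> 0) \<and> Im (zcoord C D x * cnj (zcoord C D y)) = 0"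
  unfolding dim_span_cases by auto

lemma dim_span_eq_3_iff: "dim (span {x, y, C}) = 3 \<longleftrightarrow> Im (zcoord C D x * cnj (zcoord C D y)) \<noteq> 0"
  unfolding dim_span_cases by auto

end

section \<open>The fibres of nubar and the image Delta\<close>

text \<open>For \<open>t = nubar C x y\<close> this is the Gram determinant of x, y, C.\<close>
definition gram :: "real \<times> real \<times> real \<Rightarrow> real" where
  "gram t = 1 + 2 * fst t * fst (snd t) * snd (snd t) - (fst t)\<^sup>2 - (fst (snd t))\<^sup>2 - (snd (snd t))\<^sup>2"

lemma nubar_in_Delta: "x \<bullet> x = 1 \<Longrightarrow> y \<bullet> y = 1 \<Longrightarrow> nubar C x y \<in> Delta C"
  unfolding Delta_def by (rule image_eqI[of _ _ "(x, y)"]) (auto simp: S2_iff)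

context frame
begin

lemma orbitI: "cmod w = 1 \<Longrightarrow> (rot C w x, rot C w y) \<in> orbit C x y"
  by (auto simp: orbit_def)

lemma orbitE:
  assumes "(u, v) \<in> orbit C x y"
  obtains w where "cmod w = 1" and "u = rot C w x" and "v = rot C w y"
  using assms by (auto simp: orbit_def)

lemma nubar_rot: "cmod w = 1 \<Longrightarrow> nubar C (rot C w x) (rot C w y) = nubar C x y"
  by (simp add: nubar_def inner_rot rot_coords)

lemma nubar_mirror: "nubar C (mirror C D x) (mirror C D y) = nubar C x y"
  by (simp add: nubar_def inner_mirror mirror_coords)

lemma zcoord_mult_cnj_orbit:
  assumes "(u, v) \<in> orbit C x y"
  shows "zcoord C D u * cnj (zcoord C D v) = zcoord C D x * cnj (zcoord C D y)"
  using assms by (elim orbitE) (simp only: rot_coords mult_cnj_unit)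

lemma nubar_fibre_eq_orbits:
  assumes x: "x \<bullet> x = 1" and y: "y \<bullet> y = 1"
  shows "nubar_fibre C (nubar C x y) = orbit C x y \<union> orbit C (mirror C D x) (mirror C D y)"
proof
  show "nubar_fibre C (nubar C x y) \<subseteq> orbit C x y \<union> orbit C (mirror C D x) (mirror C D y)"
  proof
    fix z assume z: "z \<in> nubar_fibre C (nubar C x y)"
    obtain u v where z_eq: "z = (u, v)" by fastforce
    from z have u: "u \<bullet> u = 1" and v: "v \<bullet> v = 1" and uv: "u \<bullet> v = x \<bullet> y"
      and uC: "u \<bullet> C = x \<bullet> C" and vC: "v \<bullet> C = y \<bullet> C"
      by (auto simp: z_eq nubar_fibre_def nubar_def S2_iff)
    have "cmod (zcoord C D u) = cmod (zcoord C D x)"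
      using cmod_zcoord[OF u] cmod_zcoord[OF x] uC by (metis norm_ge_zero power2_eq_imp_eq)
    moreover have "cmod (zcoord C D v) = cmod (zcoord C D y)"
      using cmod_zcoord[OF v] cmod_zcoord[OF y] vC by (metis norm_ge_zero power2_eq_imp_eq)
    moreover have "Re (zcoord C D u * cnj (zcoord C D v)) = Re (zcoord C D x * cnj (zcoord C D y))"
      using inner_zcoord[of u v] inner_zcoord[of x y] uv uC vC by simp
    ultimately obtain w where w: "cmod w = 1" and
      "zcoord C D u = w * zcoord C D x \<and> zcoord C D v = w * zcoord C D y \<or>
       zcoord C D u = w * cnj (zcoord C D x) \<and> zcoord C D v = w * cnj (zcoord C D y)"
      by (rule complex_pair_rotation_or_cnj)
    then have "(u, v) = (rot C w x, rot C w y) \<or>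
        (u, v) = (rot C w (mirror C D x), rot C w (mirror C D y))"
      using fvec_zcoord[of u] fvec_zcoord[of v] uC vC by (auto simp: rot_fvec mirror_coords)
    then show "z \<in> orbit C x y \<union> orbit C (mirror C D x) (mirror C D y)"
      using orbitI[OF w] by (auto simp: z_eq)
  qed
  show "orbit C x y \<union> orbit C (mirror C D x) (mirror C D y) \<subseteq> nubar_fibre C (nubar C x y)"
    using x y
    by (auto elim!: orbitE simp: nubar_fibre_def S2_iff inner_rot inner_mirror nubar_rot nubar_mirror)
qed

lemma orbit_mirror_subset:
  assumes "Im (zcoord C D x * cnj (zcoord C D y)) = 0"
  shows "orbit C (mirror C D x) (mirror C D y) \<subseteq> orbit C x y"
proof (cases "zcoord C D x = 0 \<and> zcoord C D y = 0")
  case True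
  then show ?thesis by (simp add: rot_mirror_eq_self_if_zcoord_eq_0)
next
  case False
  then obtain w0 where w0: "cmod w0 = 1"
    and "cnj (zcoord C D x) = w0 * zcoord C D x" "cnj (zcoord C D y) = w0 * zcoord C D y"
    using cnj_eq_unit_mult_if_Im_mult_cnj_eq_0 assms by blast
  then have mirror: "mirror C D x = rot C w0 x" "mirror C D y = rot C w0 y"
    by (simp_all add: mirror_def rot_fvec)
  show ?thesis
  proof clarify
    fix u v assume "(u, v) \<in> orbit C (mirror C D x) (mirror C D y)"
    then obtain w where "cmod w = 1" and "u = rot C (w * w0) x" and "v = rot C (w * w0) y"
      by (elim orbitE) (simp add: mirror rot_rot)
    then show "(u, v) \<in> orbit C x y" using w0 orbitI[of "w * w0"] by (simp add: norm_mult)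
  qed
qed

lemma orbit_mirror_disjoint:
  assumes "Im (zcoord C D x * cnj (zcoord C D y)) \<noteq> 0"
  shows "orbit C x y \<inter> orbit C (mirror C D x) (mirror C D y) = {}"
proof -
  have False if "(u, v) \<in> orbit C x y" and "(u, v) \<in> orbit C (mirror C D x) (mirror C D y)" for u v
  proof -
    have "zcoord C D x * cnj (zcoord C D y) = cnj (zcoord C D x * cnj (zcoord C D y))"
      using zcoord_mult_cnj_orbit[OF that(1)] zcoord_mult_cnj_orbit[OF that(2)]
      by (simp only: mirror_coords complex_cnj_mult)
    from arg_cong[OF this, of Im] show False using assms by simp
  qed
  then show ?thesis by auto
qed

lemma orbit_homeomorphic_circle:
  assumes "zcoord C D x \<noteq> 0 \<or> zcoord C D y \<noteq> 0"
  shows "orbit C x y homeomorphic circle"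
proof -
  let ?f = "\<lambda>w. (rot C w x, rot C w y)"
  have "inj_on ?f circle"
  proof (rule inj_onI)
    fix w w' assume "?f w = ?f w'"
    then have "w * zcoord C D x = w' * zcoord C D x" and "w * zcoord C D y = w' * zcoord C D y"
      by (simp_all add: rot_eq_iff)
    then show "w = w'" using assms by auto
  qed
  moreover have "continuous_on circle ?f"
    by (intro continuous_on_Pair continuous_on_rot continuous_on_id)
  ultimately have "circle homeomorphic orbit C x y"
    unfolding orbit_def using homeomorphic_compact[OF compact_circle] by blast
  then show ?thesis by (subst homeomorphic_sym)
qed

lemma nubar_in_Vset_iff:
  assumes x: "x \<bullet> x = 1" and y: "y \<bullet> y = 1"
  shows "nubar C x y \<in> Vset \<longleftrightarrow> zcoord C D x = 0 \<and> zcoord C D y = 0"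
proof
  assume "nubar C x y \<in> Vset"
  then have "(x \<bullet> C)\<^sup>2 = 1" and "(y \<bullet> C)\<^sup>2 = 1" by (auto simp: Vset_def nubar_def)
  then show "zcoord C D x = 0 \<and> zcoord C D y = 0"
    using cmod_zcoord[OF x] cmod_zcoord[OF y] by simp
next
  assume z: "zcoord C D x = 0 \<and> zcoord C D y = 0"
  then have "(x \<bullet> C)\<^sup>2 = 1" and "(y \<bullet> C)\<^sup>2 = 1" and "x \<bullet> y = (x \<bullet> C) * (y \<bullet> C)"
    using cmod_zcoord[OF x] cmod_zcoord[OF y] inner_zcoord[of x y] by simp_all
  then show "nubar C x y \<in> Vset" by (auto simp: Vset_def nubar_def power2_eq_1_iff)
qed

lemma gram_nubar:
  assumes x: "x \<bullet> x = 1" and y: "y \<bullet> y = 1"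
  shows "gram (nubar C x y) = (Im (zcoord C D x * cnj (zcoord C D y)))\<^sup>2"
proof -
  define r where "r = zcoord C D x * cnj (zcoord C D y)"
  have "(cmod r)\<^sup>2 = (1 - (x \<bullet> C)\<^sup>2) * (1 - (y \<bullet> C)\<^sup>2)"
    by (simp only: r_def norm_mult complex_mod_cnj power_mult_distrib cmod_zcoord[OF x] cmod_zcoord[OF y])
  then have "(Re r)\<^sup>2 + (Im r)\<^sup>2 = (1 - (x \<bullet> C)\<^sup>2) * (1 - (y \<bullet> C)\<^sup>2)"
    by (simp only: cmod_power2)
  moreover have "x \<bullet> y = (x \<bullet> C) * (y \<bullet> C) + Re r"
    using inner_zcoord[of x y] by (simp add: r_def)
  ultimately show ?thesis
    by (simp add: gram_def nubar_def r_def[symmetric] power2_eq_square algebra_simps)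
qed

lemma gram_nonneg_if_in_Delta: "t \<in> Delta C \<Longrightarrow> gram t \<ge> 0"
  by (auto simp: Delta_def S2_iff gram_nubar)

text \<open>Take x in the plane of C and D and solve for y.\<close>
lemma gram_pos_subset_Delta: "{t. (fst (snd t))\<^sup>2 < 1 \<and> 0 < gram t} \<subseteq> Delta C"
proof clarify
  fix a b c :: real assume b: "(fst (snd (a, b, c)))\<^sup>2 < 1" and g: "0 < gram (a, b, c)"
  define s where "s = sqrt (1 - b\<^sup>2)"
  have s: "s > 0" "s\<^sup>2 = 1 - b\<^sup>2" using b by (simp_all add: s_def)
  define r where "r = (a - b * c) / s"
  have "s\<^sup>2 * r\<^sup>2 = (a - b * c)\<^sup>2" using s(1) by (simp add: r_def power_divide)
  then have "s\<^sup>2 * (1 - c\<^sup>2 - r\<^sup>2) = (1 - b\<^sup>2) * (1 - c\<^sup>2) - (a - b * c)\<^sup>2"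
    using s(2) by (simp add: right_diff_distrib)
  also have "\<dots> = gram (a, b, c)" by (simp add: gram_def power2_eq_square algebra_simps)
  finally have "0 < s\<^sup>2 * (1 - c\<^sup>2 - r\<^sup>2)" using g by simp
  then have "1 - c\<^sup>2 - r\<^sup>2 \<ge> 0" using s(1) by (simp add: zero_less_mult_iff)
  define x where "x = fvec C D b (of_real s)"
  define y where "y = fvec C D c (Complex r (sqrt (1 - c\<^sup>2 - r\<^sup>2)))"
  have "x \<bullet> x = 1" using s by (simp add: x_def inner_fvec_fvec power2_eq_square)
  moreover have "y \<bullet> y = 1"
    using \<open>1 - c\<^sup>2 - r\<^sup>2 \<ge> 0\<close> by (simp add: y_def inner_fvec_fvec power2_eq_square[symmetric])
  moreover have "s * r = a - b * c" using s(1) by (simp add: r_def)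
  then have "nubar C x y = (a, b, c)"
    by (simp add: nubar_def x_def y_def inner_fvec_fvec inner_fvec)
  ultimately show "(a, b, c) \<in> Delta C" using nubar_in_Delta by metis
qed

lemma nubar_in_frontier:
  assumes x: "x \<bullet> x = 1" and y: "y \<bullet> y = 1"
    and k: "Im (zcoord C D x * cnj (zcoord C D y)) = 0"
  shows "nubar C x y \<in> frontier (Delta C)"
proof -
  define a where "a = x \<bullet> y"
  define b where "b = x \<bullet> C"
  define c where "c = y \<bullet> C"
  define R where "R = Re (zcoord C D x * cnj (zcoord C D y))"
  have aR: "a - b * c = R" using inner_zcoord[of x y] by (simp add: a_def b_def c_def R_def)
  have G0: "gram (a, b, c) = 0" using gram_nubar[OF x y] k by (simp add: nubar_def a_def b_def c_def)
  text \<open>Moving the first coordinate away from \<open>b c\<close> makes the Gram determinant negative.\<close>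
  have "nubar C x y \<notin> interior (Delta C)"
  proof
    assume "nubar C x y \<in> interior (Delta C)"
    then obtain e where e: "e > 0" "ball (a, b, c) e \<subseteq> Delta C"
      by (auto simp: mem_interior nubar_def a_def b_def c_def)
    define t where "t = (if R \<ge> 0 then e / 2 else - e / 2)"
    have "R * t \<ge> 0" and "t \<noteq> 0" and "\<bar>t\<bar> < e"
      using e by (auto simp: t_def mult_le_0_iff)
    then have "(a + t, b, c) \<in> Delta C"
      using e by (auto simp: dist_norm norm_Pair)
    then have "gram (a + t, b, c) \<ge> 0" by (rule gram_nonneg_if_in_Delta)
    moreover have "gram (a + t, b, c) = gram (a, b, c) - 2 * (a - b * c) * t - t\<^sup>2"
      by (simp add: gram_def power2_eq_square algebra_simps)
    then have "gram (a + t, b, c) = - 2 * (R * t) - t\<^sup>2"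
      by (simp add: G0 aR mult.assoc)
    moreover have "t\<^sup>2 > 0" using \<open>t \<noteq> 0\<close> by simp
    ultimately show False using \<open>R * t \<ge> 0\<close> by linarith
  qed
  moreover have "nubar C x y \<in> closure (Delta C)"
    using nubar_in_Delta[OF x y] closure_subset by blast
  ultimately show ?thesis by (simp add: frontier_def)
qed

lemma nubar_in_interior:
  assumes x: "x \<bullet> x = 1" and y: "y \<bullet> y = 1"
    and k: "Im (zcoord C D x * cnj (zcoord C D y)) \<noteq> 0"
  shows "nubar C x y \<in> interior (Delta C)"
proof -
  define U where "U = {t :: real \<times> real \<times> real. (fst (snd t))\<^sup>2 < 1 \<and> 0 < gram t}"
  have "open U"
    unfolding U_def gram_def by (intro open_Collect_conj open_Collect_less continuous_intros)
  moreover have "nubar C x y \<in> U"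
  proof -
    have "zcoord C D x \<noteq> 0" using k by auto
    then have "(cmod (zcoord C D x))\<^sup>2 > 0" by simp
    then have "(x \<bullet> C)\<^sup>2 < 1" using cmod_zcoord[OF x] by simp
    moreover have "gram (nubar C x y) > 0" using gram_nubar[OF x y] k by simp
    ultimately show ?thesis by (simp add: U_def nubar_def)
  qed
  ultimately show ?thesis
    using gram_pos_subset_Delta interior_maximal unfolding U_def by blast
qed

end

section \<open>The fibres of nu\<close>

text \<open>For \<open>w = (c + i s)\<^sup>2\<close> this is \<open>p \<mapsto> (c + s A) p (c - s C)\<close> (lemma \<open>rot_lift_half\<close>), written
  in terms of w so that it depends continuously on w.\<close>
definition rot_lift :: "real^3 \<Rightarrow> real^3 \<Rightarrow> quat \<Rightarrow> complex \<Rightarrow> quat" where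
  "rot_lift A C p w = ((1 + Re w) / 2) *\<^sub>R p - ((1 - Re w) / 2) *\<^sub>R qmult (qmult (0, A) p) (0, C)
     + (Im w / 2) *\<^sub>R (qmult (0, A) p - qmult p (0, C))"

lemma continuous_on_rot_lift [continuous_intros]:
  "continuous_on S f \<Longrightarrow> continuous_on S (\<lambda>x. rot_lift A C p (f x))"
  unfolding rot_lift_def by (intro continuous_intros) auto

lemma unit_complex_square:
  assumes "cmod w = 1"
  obtains c s where "c\<^sup>2 + s\<^sup>2 = 1" and "w = Complex (c\<^sup>2 - s\<^sup>2) (2 * c * s)"
proof -
  define t where "t = Arg w"
  have "w \<noteq> 0" using assms by auto
  then have "w = cis t" using assms by (simp add: t_def cis_Arg complex_sgn_def)
  also have "\<dots> = Complex ((cos (t / 2))\<^sup>2 - (sin (t / 2))\<^sup>2) (2 * cos (t / 2) * sin (t / 2))"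
    using cos_double[of "t / 2"] sin_double[of "t / 2"] by (simp add: cis.ctr)
  finally show ?thesis using that[of "cos (t / 2)" "sin (t / 2)"] by simp
qed

lemma rot_lift_half:
  assumes "c\<^sup>2 + s\<^sup>2 = 1"
  shows "rot_lift A C p (Complex (c\<^sup>2 - s\<^sup>2) (2 * c * s)) = qmult (qmult (c, s *\<^sub>R A) p) (c, - (s *\<^sub>R C))"
proof -
  have "(1 + (c\<^sup>2 - s\<^sup>2)) / 2 = c\<^sup>2" and "(1 - (c\<^sup>2 - s\<^sup>2)) / 2 = s\<^sup>2" and "2 * c * s / 2 = c * s"
    using assms by auto
  then have "rot_lift A C p (Complex (c\<^sup>2 - s\<^sup>2) (2 * c * s)) =
      c\<^sup>2 *\<^sub>R p - s\<^sup>2 *\<^sub>R qmult (qmult (0, A) p) (0, C) + (c * s) *\<^sub>R (qmult (0, A) p - qmult p (0, C))"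
    by (simp only: rot_lift_def complex.sel)
  then show ?thesis by (simp add: coord_simps algebra_simps power2_eq_square)
qed

lemma hopf_rot_lift:
  assumes A: "A \<bullet> A = 1" and C: "C \<bullet> C = 1" and w: "cmod w = 1"
  shows "hopf A (rot_lift A C p w) = rot C w (hopf A p)"
proof -
  obtain c s where cs: "c\<^sup>2 + s\<^sup>2 = 1" and w: "w = Complex (c\<^sup>2 - s\<^sup>2) (2 * c * s)"
    using unit_complex_square[OF w] by blast
  have "hopf A (c, s *\<^sub>R A) = A"
    using hopf_qcomplex[OF A, of "Complex c s"] cs by (simp add: qcomplex_def cmod_def)
  then have "hopf A (rot_lift A C p w) = hopf (hopf A p) (c, - (s *\<^sub>R C))"
    by (simp add: w rot_lift_half[OF cs] hopf_qmult)
  also have "\<dots> = rot C w (hopf A p)"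
  proof -
    have hopf_C: "hopf X (c, - (s *\<^sub>R C)) =
        (c\<^sup>2 - s\<^sup>2 * (C \<bullet> C)) *\<^sub>R X + (2 * s\<^sup>2 * (C \<bullet> X)) *\<^sub>R C + (2 * c * s) *\<^sub>R cross3 C X" for X
      by (simp add: hopf_def coord_simps algebra_simps power2_eq_square)
    have c2: "c\<^sup>2 = 1 - s\<^sup>2" using cs by simp
    show ?thesis
      using C by (simp add: hopf_C rot_def w inner_commute algebra_simps c2)
  qed
  finally show ?thesis .
qed

lemma qnorm2_rot_lift:
  assumes "A \<bullet> A = 1" and "C \<bullet> C = 1" and w: "cmod w = 1" and "qnorm2 p = 1"
  shows "qnorm2 (rot_lift A C p w) = 1"
proof -
  obtain c s where cs: "c\<^sup>2 + s\<^sup>2 = 1" and "w = Complex (c\<^sup>2 - s\<^sup>2) (2 * c * s)"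
    using unit_complex_square[OF w] by blast
  moreover have "qnorm2 (c, s *\<^sub>R A) = 1" and "qnorm2 (c, - (s *\<^sub>R C)) = 1"
    using cs assms by (simp_all add: qnorm2_def power2_eq_square)
  ultimately show ?thesis using assms by (simp add: rot_lift_half[OF cs] qnorm2_qmult)
qed

definition hopf_preimage :: "real^3 \<Rightarrow> real^3 \<Rightarrow> ((real^3) \<times> (real^3)) set \<Rightarrow> (quat \<times> quat) set" where
  "hopf_preimage A B F = {(p, q). p \<in> S3 \<and> q \<in> S3 \<and> (hopf A p, hopf B q) \<in> F}"

lemma nu_fibre_eq_hopf_preimage:
  assumes "A \<in> S2" and "B \<in> S2"
  shows "nu_fibre A B C z = hopf_preimage A B (nubar_fibre C z)"
  using hopf_in_S2[OF assms(1)] hopf_in_S2[OF assms(2)]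
  by (auto simp: nu_fibre_def nubar_fibre_def hopf_preimage_def nu_def)

lemma hopf_preimage_point_homeomorphic:
  assumes A: "A \<bullet> A = 1" and B: "B \<bullet> B = 1" and x: "x \<bullet> x = 1" and y: "y \<bullet> y = 1"
  shows "(circle \<times> circle) homeomorphic hopf_preimage A B {(x, y)}"
proof -
  obtain p0 where p0: "qnorm2 p0 = 1" "hopf A p0 = x" using hopf_surj[OF A x] by blast
  obtain q0 where q0: "qnorm2 q0 = 1" "hopf B q0 = y" using hopf_surj[OF B y] by blast
  have "hopf_preimage A B {(x, y)} = {p \<in> S3. hopf A p = hopf A p0} \<times> {q \<in> S3. hopf B q = hopf B q0}"
    by (auto simp: hopf_preimage_def p0 q0)
  then show ?thesis
    using homeomorphic_Times[OF hopf_fibre_homeomorphic_circle[OF A p0(1)]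
        hopf_fibre_homeomorphic_circle[OF B q0(1)]] by simp
qed

definition torus_param ::
    "real^3 \<Rightarrow> real^3 \<Rightarrow> real^3 \<Rightarrow> quat \<Rightarrow> quat \<Rightarrow> complex \<times> complex \<times> complex \<Rightarrow> quat \<times> quat" where
  "torus_param A B C p0 q0 W =
    (qmult (qcomplex A (fst W)) (rot_lift A C p0 (snd (snd W))),
     qmult (qcomplex B (fst (snd W))) (rot_lift B C q0 (snd (snd W))))"

lemma continuous_on_torus_param: "continuous_on S (torus_param A B C p0 q0)"
  unfolding torus_param_def by (intro continuous_intros continuous_on_fst continuous_on_snd)

context frame
begin

lemma torus_param_image:
  assumes A: "A \<bullet> A = 1" and B: "B \<bullet> B = 1" and p0: "qnorm2 p0 = 1" and q0: "qnorm2 q0 = 1"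
  shows "torus_param A B C p0 q0 ` (circle \<times> circle \<times> circle) =
    hopf_preimage A B (orbit C (hopf A p0) (hopf B q0))"
proof
  show "torus_param A B C p0 q0 ` (circle \<times> circle \<times> circle) \<subseteq>
      hopf_preimage A B (orbit C (hopf A p0) (hopf B q0))"
    using A B p0 q0 orbitI
    by (auto simp: torus_param_def hopf_preimage_def S3_iff qnorm2_qmult qnorm2_qcomplex
        qnorm2_rot_lift hopf_qcomplex_qmult hopf_rot_lift)
  show "hopf_preimage A B (orbit C (hopf A p0) (hopf B q0)) \<subseteq>
      torus_param A B C p0 q0 ` (circle \<times> circle \<times> circle)"
  proof clarify
    fix p q assume "(p, q) \<in> hopf_preimage A B (orbit C (hopf A p0) (hopf B q0))"
    then have p: "qnorm2 p = 1" and q: "qnorm2 q = 1"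
      and "(hopf A p, hopf B q) \<in> orbit C (hopf A p0) (hopf B q0)"
      by (auto simp: hopf_preimage_def S3_iff)
    then obtain w where w: "cmod w = 1"
      and "hopf A p = hopf A (rot_lift A C p0 w)" and "hopf B q = hopf B (rot_lift B C q0 w)"
      by (elim orbitE) (simp add: A B p0 q0 hopf_rot_lift)
    moreover note qnorm2_rot_lift[OF A CC w p0] qnorm2_rot_lift[OF B CC w q0]
    ultimately obtain w1 w2 where "cmod w1 = 1" "p = qmult (qcomplex A w1) (rot_lift A C p0 w)"
      and "cmod w2 = 1" "q = qmult (qcomplex B w2) (rot_lift B C q0 w)"
      using hopf_eqE[OF A p] hopf_eqE[OF B q] by metis
    then show "(p, q) \<in> torus_param A B C p0 q0 ` (circle \<times> circle \<times> circle)"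
      using w by (auto simp: torus_param_def intro!: image_eqI[of _ _ "(w1, w2, w)"])
  qed
qed

text \<open>The rotation angle is read off from the images in \<open>S\<^sup>2 \<times> S\<^sup>2\<close>, which are not both on the
  axis C; the fibre coordinates then by cancellation.\<close>
lemma inj_on_torus_param:
  assumes A: "A \<bullet> A = 1" and B: "B \<bullet> B = 1" and p0: "qnorm2 p0 = 1" and q0: "qnorm2 q0 = 1"
    and nz: "zcoord C D (hopf A p0) \<noteq> 0 \<or> zcoord C D (hopf B q0) \<noteq> 0"
  shows "inj_on (torus_param A B C p0 q0) (circle \<times> circle \<times> circle)"
proof (rule inj_onI, clarsimp)
  fix w1 w2 w v1 v2 v
  assume unit: "cmod w1 = 1" "cmod w2 = 1" "cmod w = 1" "cmod v1 = 1" "cmod v2 = 1" "cmod v = 1"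
    and eq: "torus_param A B C p0 q0 (w1, w2, w) = torus_param A B C p0 q0 (v1, v2, v)"
  then have eqA: "qmult (qcomplex A w1) (rot_lift A C p0 w) = qmult (qcomplex A v1) (rot_lift A C p0 v)"
    and eqB: "qmult (qcomplex B w2) (rot_lift B C q0 w) = qmult (qcomplex B v2) (rot_lift B C q0 v)"
    by (simp_all add: torus_param_def)
  have "rot C w (hopf A p0) = rot C v (hopf A p0)"
    using arg_cong[OF eqA, of "hopf A"] unit A p0 by (simp add: hopf_qcomplex_qmult hopf_rot_lift CC)
  moreover have "rot C w (hopf B q0) = rot C v (hopf B q0)"
    using arg_cong[OF eqB, of "hopf B"] unit B q0 by (simp add: hopf_qcomplex_qmult hopf_rot_lift CC)
  ultimately have "w = v" using nz by (auto simp: rot_eq_iff)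
  then have "qcomplex A w1 = qcomplex A v1" and "qcomplex B w2 = qcomplex B v2"
    using eqA eqB qmult_cancel_right qnorm2_rot_lift[OF A CC unit(3) p0]
      qnorm2_rot_lift[OF B CC unit(3) q0] by blast+
  then show "w1 = v1 \<and> w2 = v2 \<and> w = v"
    using qcomplex_inj[OF A] qcomplex_inj[OF B] \<open>w = v\<close> by blast
qed

lemma hopf_preimage_orbit_homeomorphic:
  assumes A: "A \<bullet> A = 1" and B: "B \<bullet> B = 1" and x: "x \<bullet> x = 1" and y: "y \<bullet> y = 1"
    and nz: "zcoord C D x \<noteq> 0 \<or> zcoord C D y \<noteq> 0"
  shows "(circle \<times> circle \<times> circle) homeomorphic hopf_preimage A B (orbit C x y)"
proof -
  obtain p0 where p0: "qnorm2 p0 = 1" "hopf A p0 = x" using hopf_surj[OF A x] by blast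
  obtain q0 where q0: "qnorm2 q0 = 1" "hopf B q0 = y" using hopf_surj[OF B y] by blast
  have "compact (circle \<times> circle \<times> circle)" by (intro compact_Times compact_circle)
  moreover note continuous_on_torus_param
  moreover have "inj_on (torus_param A B C p0 q0) (circle \<times> circle \<times> circle)"
    using inj_on_torus_param[OF A B p0(1) q0(1)] nz by (simp add: p0 q0)
  ultimately show ?thesis
    using homeomorphic_compact torus_param_image[OF A B p0(1) q0(1), unfolded p0(2) q0(2)] by blast
qed

lemma fibres_dim_span_1:
  assumes A: "A \<in> S2" and B: "B \<in> S2" and x: "x \<in> S2" and y: "y \<in> S2"
    and "dim (span {x, y, C}) = 1"
  shows "nubar C x y \<in> Vset \<and> nubar_fibre C (nubar C x y) = {(x, y)} \<and>
    is_2torus (nu_fibre A B C (nubar C x y))"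
proof -
  have z: "zcoord C D x = 0" "zcoord C D y = 0"
    using dim_span_eq_1_iff[THEN iffD1, OF assms(5)] by simp_all
  have "orbit C x y = {(x, y)}" and "orbit C (mirror C D x) (mirror C D y) = {(x, y)}"
    using z by (simp_all add: orbit_def rot_mirror_eq_self_if_zcoord_eq_0 circle_def image_constant_conv)
  then have fibre: "nubar_fibre C (nubar C x y) = {(x, y)}"
    using nubar_fibre_eq_orbits x y unfolding S2_iff by simp
  moreover have "nubar C x y \<in> Vset" using nubar_in_Vset_iff z x y unfolding S2_iff by simp
  moreover have "(circle \<times> circle) homeomorphic hopf_preimage A B {(x, y)}"
    using hopf_preimage_point_homeomorphic assms by (simp add: S2_iff)
  then have "is_2torus (nu_fibre A B C (nubar C x y))"
    unfolding is_2torus_def nu_fibre_eq_hopf_preimage[OF A B] fibre by (subst homeomorphic_sym)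
  ultimately show ?thesis by blast
qed

lemma fibres_dim_span_2:
  assumes A: "A \<in> S2" and B: "B \<in> S2" and x: "x \<in> S2" and y: "y \<in> S2"
    and "dim (span {x, y, C}) = 2"
  shows "nubar C x y \<in> frontier (Delta C) - Vset \<and> is_circle (nubar_fibre C (nubar C x y)) \<and>
    is_3torus (nu_fibre A B C (nubar C x y))"
proof -
  have x1: "x \<bullet> x = 1" and y1: "y \<bullet> y = 1" using x y by (simp_all add: S2_iff)
  have nz: "zcoord C D x \<noteq> 0 \<or> zcoord C D y \<noteq> 0"
    and k: "Im (zcoord C D x * cnj (zcoord C D y)) = 0"
    using dim_span_eq_2_iff[THEN iffD1, OF assms(5)] by simp_all
  have fibre: "nubar_fibre C (nubar C x y) = orbit C x y"
    using nubar_fibre_eq_orbits[OF x1 y1] orbit_mirror_subset[OF k] by blast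
  have "nubar C x y \<in> frontier (Delta C) - Vset"
    using nubar_in_frontier[OF x1 y1 k] nubar_in_Vset_iff[OF x1 y1] nz by blast
  moreover have "is_circle (nubar_fibre C (nubar C x y))"
    unfolding is_circle_def fibre using orbit_homeomorphic_circle[OF nz] .
  moreover have "is_3torus (nu_fibre A B C (nubar C x y))"
    unfolding is_3torus_def nu_fibre_eq_hopf_preimage[OF A B] fibre
    using hopf_preimage_orbit_homeomorphic[OF _ _ x1 y1 nz] A B
    by (subst homeomorphic_sym) (simp add: S2_iff)
  ultimately show ?thesis by blast
qed

lemma fibres_dim_span_3:
  assumes A: "A \<in> S2" and B: "B \<in> S2" and x: "x \<in> S2" and y: "y \<in> S2"
    and "dim (span {x, y, C}) = 3"
  shows "nubar C x y \<in> interior (Delta C) \<and> is_two_circles (nubar_fibre C (nubar C x y)) \<and>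
    is_two_3tori (nu_fibre A B C (nubar C x y))"
proof -
  have x1: "x \<bullet> x = 1" and y1: "y \<bullet> y = 1" using x y by (simp_all add: S2_iff)
  have A1: "A \<bullet> A = 1" and B1: "B \<bullet> B = 1" using A B by (simp_all add: S2_iff)
  have k: "Im (zcoord C D x * cnj (zcoord C D y)) \<noteq> 0"
    using dim_span_eq_3_iff assms(5) by blast
  then have nz: "zcoord C D x \<noteq> 0 \<or> zcoord C D y \<noteq> 0"
    and nz': "zcoord C D (mirror C D x) \<noteq> 0 \<or> zcoord C D (mirror C D y) \<noteq> 0"
    by (auto simp: mirror_coords)
  have x1': "mirror C D x \<bullet> mirror C D x = 1" and y1': "mirror C D y \<bullet> mirror C D y = 1"
    using x1 y1 by (simp_all add: inner_mirror)
  let ?O = "orbit C x y" and ?O' = "orbit C (mirror C D x) (mirror C D y)"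
  have fibre: "nubar_fibre C (nubar C x y) = ?O \<union> ?O'"
    by (rule nubar_fibre_eq_orbits[OF x1 y1])
  have disj: "?O \<inter> ?O' = {}" by (rule orbit_mirror_disjoint[OF k])
  have "(circle \<times> {0::real, 1}) homeomorphic (?O \<union> ?O')"
    using homeomorphic_disjoint_Un[OF compact_circle _ _ disj] orbit_homeomorphic_circle[OF nz]
      orbit_homeomorphic_circle[OF nz'] homeomorphic_sym by blast
  then have "is_two_circles (nubar_fibre C (nubar C x y))"
    unfolding is_two_circles_def fibre by (subst homeomorphic_sym)
  moreover have "is_two_3tori (nu_fibre A B C (nubar C x y))"
  proof -
    have "nu_fibre A B C (nubar C x y) = hopf_preimage A B ?O \<union> hopf_preimage A B ?O'"
      by (auto simp: nu_fibre_eq_hopf_preimage[OF A B] fibre hopf_preimage_def)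
    moreover have "hopf_preimage A B ?O \<inter> hopf_preimage A B ?O' = {}"
      using disj by (auto simp: hopf_preimage_def)
    moreover have "compact (circle \<times> circle \<times> circle)" by (intro compact_Times compact_circle)
    ultimately show ?thesis
      unfolding is_two_3tori_def
      using homeomorphic_disjoint_Un hopf_preimage_orbit_homeomorphic[OF A1 B1 x1 y1 nz]
        hopf_preimage_orbit_homeomorphic[OF A1 B1 x1' y1' nz'] homeomorphic_sym
      by metis
  qed
  moreover have "nubar C x y \<in> interior (Delta C)" by (rule nubar_in_interior[OF x1 y1 k])
  ultimately show ?thesis by blast
qed

end

theorem mainTheorem8:
  fixes A B C x y :: "real^3"
  assumes "A \<in> S2" and "B \<in> S2" and "C \<in> S2"
    and "x \<in> S2" and "y \<in> S2"
  shows "(dim (span {x, y, C}) = 1 \<longrightarrow>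
            nubar C x y \<in> Vset \<and>
            nubar_fibre C (nubar C x y) = {(x, y)} \<and>
            is_2torus (nu_fibre A B C (nubar C x y)))
       \<and> (dim (span {x, y, C}) = 2 \<longrightarrow>
            nubar C x y \<in> frontier (Delta C) - Vset \<and>
            is_circle (nubar_fibre C (nubar C x y)) \<and>
            is_3torus (nu_fibre A B C (nubar C x y)))
       \<and> (dim (span {x, y, C}) = 3 \<longrightarrow>
            nubar C x y \<in> interior (Delta C) \<and>
            is_two_circles (nubar_fibre C (nubar C x y)) \<and>
            is_two_3tori (nu_fibre A B C (nubar C x y)))
       \<and> nubar C C C = (1, 1, 1) \<and> nubar C C (- C) = (-1, 1, -1)
       \<and> nubar C (- C) C = (-1, -1, 1) \<and> nubar C (- C) (- C) = (1, -1, -1)"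
proof -
  have "C \<bullet> C = 1" using assms(3) by (simp add: S2_iff)
  then obtain D where "frame C D" using exists_orthogonal_unit by (auto simp: frame_def)
  then interpret frame C D .
  have "nubar C C C = (1, 1, 1) \<and> nubar C C (- C) = (-1, 1, -1)
      \<and> nubar C (- C) C = (-1, -1, 1) \<and> nubar C (- C) (- C) = (1, -1, -1)"
    by (simp add: nubar_def)
  then show ?thesis
    using fibres_dim_span_1[OF assms(1,2,4,5)] fibres_dim_span_2[OF assms(1,2,4,5)]
      fibres_dim_span_3[OF assms(1,2,4,5)]
    by blast
qed

end
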